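(* If the ST problem for $(D_{SC},F,B)$ has a positive answer, then there exists a set cover of size $k$ for $(\mathcal U,\mathcal S)$, i.e. a $k$-element subfamily of $\mathcal S$ whose union is $\mathcal U$.
   Context: Snow Team problem (ST): given a digraph $D=(\mathcal V,\mathcal A)$ whose underlying graph is connected, and $F:\mathcal V\to\{0,1\}$, $B:\mathcal V\to\mathbb N$, with $\mathbf k_B=\sum_vB(v)$: do there exist $\mathbf k_B$ directed walks, exactly $B(v)$ of which start at each $v$, such that, letting $H$ be the subgraph consisting of the vertices and arcs of these walks, all vertices of $F^{-1}(1)$ lie in one connected component of the underlying undirected graph of $H$? Construction: $\mathcal U=\{1,\dots,n\}$, $\mathcal S=\{S_1,\dots,S_m\}$ with $S_t\subseteq\mathcal U$, $\bigcup_tS_t=\mathcal U$, and $1\le k\le m$. Write $S_t=\{x_1<\dots<x_{\ell(t)}\}$ and $I_i=\{j: i\in S_j\}$. The digraph $D_{SC}$ has vertices $u_i$ ($i\in\mathcal U$); $u_{i,j},u'_{i,j},v_{i,j},v'_{i,j}$ ($i\in\mathcal U$, $j\in I_i$); and $z,z_1,\dots,z_k$. Its arcs are those of the vertical paths $P_{i,j}=(u_{i,j},u_i,u'_{i,j},v_{i,j},v'_{i,j})$ ($i\in\mathcal U,j\in I_i$), of the horizontal paths $P^h_t=(z,v_{x_1,t},v_{x_2,t},\dots,v_{x_{\ell(t)},t})$ ($t\in\{1,\dots,m\}$, with $x_1<\dots<x_{\ell(t)}$ the elements of $S_t$), and the arcs $(z_l,z)$ for $l=1,\dots,k$. Set $F(v)=1$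 for all vertices $v$, and $B(v)=1$ if $v$ is a source of $D_{SC}$ (i.e. $v\in\{u_{i,j}\}\cup\{z_1,\dots,z_k\}$) and $B(v)=0$ otherwise. *)

theory Defs
  imports Main
begin

definition is_walk :: "'v set \<Rightarrow> ('v \<times> 'v) set \<Rightarrow> 'v list \<Rightarrow> bool" where
  "is_walk V A w \<longleftrightarrow> w \<noteq> [] \<and> set w \<subseteq> V \<and> (\<forall>i. Suc i < length w \<longrightarrow> (w ! i, w ! Suc i) \<in> A)"

definition walk_arcs :: "'v list \<Rightarrow> ('v \<times> 'v) set" where
  "walk_arcs w = set (zip w (tl w))"

definition ST_positive :: "'v set \<Rightarrow> ('v \<times> 'v) set \<Rightarrow> ('v \<Rightarrow> nat) \<Rightarrow> ('v \<Rightarrow> nat) \<Rightarrow> bool" where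
  "ST_positive V A F B \<longleftrightarrow>
    (\<exists>ws :: 'v list list.
       (\<forall>w\<in>set ws. is_walk V A w) \<and>
       (\<forall>v\<in>V. length (filter (\<lambda>w. hd w = v) ws) = B v) \<and>
       (let HV = (\<Union>w\<in>set ws. set w); HA = (\<Union>w\<in>set ws. walk_arcs w) in
        \<forall>x\<in>V. \<forall>y\<in>V. F x = 1 \<longrightarrow> F y = 1 \<longrightarrow>
          x \<in> HV \<and> y \<in> HV \<and> (x, y) \<in> (HA \<union> HA\<inverse>)\<^sup>*))"

datatype vtx = U nat | Uij nat nat | U'ij nat nat | Vij nat nat | V'ij nat nat | Z | Zl nat

definition Iset :: "nat \<Rightarrow> (nat \<Rightarrow> nat set) \<Rightarrow> nat \<Rightarrow> nat set" where
  "Iset m S i = {j \<in> {1..m}. i \<in> S j}"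

definition DSC_V :: "nat \<Rightarrow> nat \<Rightarrow> (nat \<Rightarrow> nat set) \<Rightarrow> nat \<Rightarrow> vtx set" where
  "DSC_V n m S k =
     {U i | i. i \<in> {1..n}}
     \<union> {Uij i j | i j. i \<in> {1..n} \<and> j \<in> Iset m S i}
     \<union> {U'ij i j | i j. i \<in> {1..n} \<and> j \<in> Iset m S i}
     \<union> {Vij i j | i j. i \<in> {1..n} \<and> j \<in> Iset m S i}
     \<union> {V'ij i j | i j. i \<in> {1..n} \<and> j \<in> Iset m S i}
     \<union> {Z} \<union> {Zl l | l. l \<in> {1..k}}"

definition consec :: "nat set \<Rightarrow> nat \<Rightarrow> nat \<Rightarrow> bool" where
  "consec St x y \<longleftrightarrow> x \<in> St \<and> y \<in> St \<and> x < y \<and> (\<forall>w\<in>St. \<not> (x < w \<and> w < y))"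

definition DSC_A :: "nat \<Rightarrow> nat \<Rightarrow> (nat \<Rightarrow> nat set) \<Rightarrow> nat \<Rightarrow> (vtx \<times> vtx) set" where
  "DSC_A n m S k =
     \<comment> \<open>vertical paths P_{i,j} = (u_{i,j}, u_i, u'_{i,j}, v_{i,j}, v'_{i,j})\<close>
     {(Uij i j, U i) | i j. i \<in> {1..n} \<and> j \<in> Iset m S i}
     \<union> {(U i, U'ij i j) | i j. i \<in> {1..n} \<and> j \<in> Iset m S i}
     \<union> {(U'ij i j, Vij i j) | i j. i \<in> {1..n} \<and> j \<in> Iset m S i}
     \<union> {(Vij i j, V'ij i j) | i j. i \<in> {1..n} \<and> j \<in> Iset m S i}
     \<comment> \<open>horizontal paths P^h_t = (z, v_{x_1,t}, ..., v_{x_l(t),t})\<close>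
     \<union> {(Z, Vij (Min (S t)) t) | t. t \<in> {1..m} \<and> S t \<noteq> {}}
     \<union> {(Vij x t, Vij y t) | x y t. t \<in> {1..m} \<and> consec (S t) x y}
     \<comment> \<open>arcs (z_l, z)\<close>
     \<union> {(Zl l, Z) | l. l \<in> {1..k}}"

definition DSC_B :: "vtx \<Rightarrow> nat" where
  "DSC_B v = (case v of Uij _ _ \<Rightarrow> 1 | Zl _ \<Rightarrow> 1 | _ \<Rightarrow> 0)"

definition DSC_F :: "vtx \<Rightarrow> nat" where
  "DSC_F v = 1"

end

theory Submission
  imports Defs
begin

text \<open>Let \<open>E\<close> be the set of those \<open>t\<close> for which some walk uses the arc \<open>(z, v_{x_1,t})\<close>
  entering the horizontal path \<open>P^h_t\<close>. Such an arc can only be the second step of a walk starting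
  at some \<open>z_l\<close>, so \<open>|E| \<le> k\<close>.

  For \<open>t \<notin> E\<close> no walk moves along \<open>P^h_t\<close>. The \<open>|I_i|\<close> walks starting at the vertices
  \<open>u_{i,j}\<close> must visit all \<open>|I_i|\<close> vertices \<open>u'_{i,j}\<close>, each at its third position, so every
  \<open>u'_{i,j}\<close> lies on exactly one walk. A walk reaching \<open>v'_{a,t}\<close> ends there and entered
  \<open>P^h_t\<close> through some \<open>u'_{c,t}\<close> with \<open>c \<le> a\<close>; so \<open>a \<mapsto> c\<close> is an injection of \<open>S_t\<close> into
  itself below the identity, hence the identity, and the walk through \<open>u'_{c,t}\<close> goes straight
  down to \<open>v'_{c,t}\<close>.

  Hence if an element \<open>i\<close> lay in no \<open>S_t\<close> with \<open>t \<in> E\<close>, no used arc would join the vertices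
  of the paths \<open>P_{i,j}\<close> to the rest of the graph, contradicting connectivity. So \<open>E\<close> covers
  \<open>U\<close>, and padding it gives a cover of size exactly \<open>k\<close>.\<close>

lemma walk_arcs_iff:
  "(a, b) \<in> walk_arcs w \<longleftrightarrow> (\<exists>q. Suc q < length w \<and> w ! q = a \<and> w ! Suc q = b)"
  unfolding walk_arcs_def in_set_zip by (force simp: nth_tl)

lemma card_preimage_le_if_length_filter_le_1:
  assumes "finite A" and "\<And>a. a \<in> A \<Longrightarrow> length (filter (\<lambda>x. f x = a) xs) \<le> 1"
  shows "card {x \<in> set xs. f x \<in> A} \<le> card A"
proof -
  have "{x \<in> set xs. f x \<in> A} = (\<Union>a\<in>A. set (filter (\<lambda>x. f x = a) xs))"
    by auto
  also have "card \<dots> \<le> (\<Sum>a\<in>A. card (set (filter (\<lambda>x. f x = a) xs)))"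
    by (rule card_UN_le[OF assms(1)])
  also have "\<dots> \<le> (\<Sum>a\<in>A. 1)"
    using assms(2) card_length le_trans by (intro sum_mono) blast
  finally show ?thesis
    by simp
qed

lemma rtrancl_symcl_preserves:
  assumes "(x, y) \<in> (R \<union> R\<inverse>)\<^sup>*" and "\<And>a b. (a, b) \<in> R \<Longrightarrow> a \<in> C \<longleftrightarrow> b \<in> C" and "x \<in> C"
  shows "y \<in> C"
  using assms by (induction rule: rtrancl_induct) auto

lemma inj_on_decreasing_self_map_id:
  fixes g :: "'a::wellorder \<Rightarrow> 'a"
  assumes "inj_on g A" and "g ` A \<subseteq> A" and "\<And>a. a \<in> A \<Longrightarrow> g a \<le> a" and "a \<in> A"
  shows "g a = a"
  using assms(4)
proof (induction a rule: less_induct)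
  case (less a)
  show ?case
  proof (rule ccontr)
    assume "g a \<noteq> a"
    with assms(3) less.prems have "g a < a"
      by (simp add: order.strict_iff_order)
    moreover have "g a \<in> A"
      using assms(2) less.prems by blast
    ultimately have "g (g a) = g a"
      by (rule less.IH)
    with inj_onD[OF assms(1)] \<open>g a \<in> A\<close> less.prems \<open>g a \<noteq> a\<close> show False
      by blast
  qed
qed

lemma exists_card_between:
  assumes "J \<subseteq> A" and "finite A" and "card J \<le> k" and "k \<le> card A"
  shows "\<exists>K. J \<subseteq> K \<and> K \<subseteq> A \<and> card K = k"
proof -
  have "finite J"
    using assms(1,2) by (rule finite_subset)
  have "k - card J \<le> card (A - J)"
    using card_Diff_subset[OF \<open>finite J\<close> assms(1)] assms(4) by simp
  then obtain T where T: "T \<subseteq> A - J" "card T = k - card J" "finite T"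
    by (rule obtain_subset_with_card_n)
  have "card (J \<union> T) = card J + card T"
    using T \<open>finite J\<close> by (intro card_Un_disjoint) auto
  with T assms(1,3) show ?thesis
    by (intro exI[of _ "J \<union> T"]) auto
qed

fun element_of :: "vtx \<Rightarrow> nat option" where
  "element_of (U i) = Some i"
| "element_of (Uij i j) = Some i"
| "element_of (U'ij i j) = Some i"
| "element_of (Vij i j) = Some i"
| "element_of (V'ij i j) = Some i"
| "element_of Z = None"
| "element_of (Zl l) = None"

locale DSC_solution =
  fixes n m k :: nat and S :: "nat \<Rightarrow> nat set" and ws :: "vtx list list"
  assumes sets_in_universe: "\<forall>t\<in>{1..m}. S t \<subseteq> {1..n}"
    and walks: "\<forall>w\<in>set ws. is_walk (DSC_V n m S k) (DSC_A n m S k) w"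
    and starts: "\<forall>v\<in>DSC_V n m S k. length (filter (\<lambda>w. hd w = v) ws) = DSC_B v"
    and connected: "\<forall>x\<in>DSC_V n m S k. \<forall>y\<in>DSC_V n m S k.
      x \<in> (\<Union>w\<in>set ws. set w) \<and> y \<in> (\<Union>w\<in>set ws. set w) \<and>
      (x, y) \<in> ((\<Union>w\<in>set ws. walk_arcs w) \<union> (\<Union>w\<in>set ws. walk_arcs w)\<inverse>)\<^sup>*"
begin

abbreviation "VSC \<equiv> DSC_V n m S k"
abbreviation "ASC \<equiv> DSC_A n m S k"
abbreviation "W \<equiv> set ws"
abbreviation "HA \<equiv> \<Union>w\<in>W. walk_arcs w"

lemma VSC_iff [simp]:
  "U i \<in> VSC \<longleftrightarrow> i \<in> {1..n}"
  "Uij i j \<in> VSC \<longleftrightarrow> i \<in> {1..n} \<and> j \<in> Iset m S i"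
  "U'ij i j \<in> VSC \<longleftrightarrow> i \<in> {1..n} \<and> j \<in> Iset m S i"
  "Vij i j \<in> VSC \<longleftrightarrow> i \<in> {1..n} \<and> j \<in> Iset m S i"
  "V'ij i j \<in> VSC \<longleftrightarrow> i \<in> {1..n} \<and> j \<in> Iset m S i"
  "Z \<in> VSC"
  "Zl l \<in> VSC \<longleftrightarrow> l \<in> {1..k}"
  by (auto simp: DSC_V_def)

lemma arc_target_not_source: "(a, b) \<in> ASC \<Longrightarrow> DSC_B b = 0"
  by (auto simp: DSC_A_def DSC_B_def)

lemma arc_into_U: "(a, U i) \<in> ASC \<Longrightarrow> \<exists>j. a = Uij i j"
  by (auto simp: DSC_A_def)

lemma arc_into_U'ij: "(a, U'ij i j) \<in> ASC \<Longrightarrow> a = U i"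
  by (auto simp: DSC_A_def)

lemma arc_into_Vij:
  "(a, Vij i t) \<in> ASC \<Longrightarrow> a = U'ij i t \<or> (a = Z \<and> i = Min (S t)) \<or> (\<exists>x<i. a = Vij x t)"
  by (auto simp: DSC_A_def consec_def)

lemma arc_into_V'ij: "(a, V'ij i j) \<in> ASC \<Longrightarrow> a = Vij i j"
  by (auto simp: DSC_A_def)

lemma arc_into_Z: "(a, Z) \<in> ASC \<Longrightarrow> \<exists>l. a = Zl l"
  by (auto simp: DSC_A_def)

lemma no_arc_from_V'ij: "(V'ij i j, b) \<notin> ASC"
  by (auto simp: DSC_A_def)

lemma arc_from_Vij: "(Vij i t, b) \<in> ASC \<Longrightarrow> b = V'ij i t \<or> (\<exists>y>i. b = Vij y t)"
  by (auto simp: DSC_A_def consec_def)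

lemma arc_between_elements:
  assumes "(a, b) \<in> ASC" and "element_of a \<noteq> element_of b"
  shows "(\<exists>t\<in>{1..m}. S t \<noteq> {} \<and> a = Z \<and> b = Vij (Min (S t)) t) \<or>
    (\<exists>x y t. t \<in> {1..m} \<and> x \<in> S t \<and> y \<in> S t \<and> a = Vij x t \<and> b = Vij y t)"
  using assms by (auto simp: DSC_A_def consec_def)

lemma walk_vertex_in_VSC: "w \<in> W \<Longrightarrow> v \<in> set w \<Longrightarrow> v \<in> VSC"
  using walks unfolding is_walk_def by blast

lemma walk_nth_in_VSC: "w \<in> W \<Longrightarrow> q < length w \<Longrightarrow> w ! q \<in> VSC"
  using walk_vertex_in_VSC nth_mem by blast

lemma walk_step_in_ASC: "w \<in> W \<Longrightarrow> Suc q < length w \<Longrightarrow> (w ! q, w ! Suc q) \<in> ASC"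
  using walks by (auto simp: is_walk_def)

lemma walk_step_used: "w \<in> W \<Longrightarrow> Suc q < length w \<Longrightarrow> (w ! q, w ! Suc q) \<in> HA"
  unfolding UN_iff walk_arcs_iff by blast

lemma used_arcE:
  assumes "(a, b) \<in> HA"
  obtains w q where "w \<in> W" "Suc q < length w" "w ! q = a" "w ! Suc q = b"
  using assms unfolding UN_iff walk_arcs_iff by blast

lemma used_arc_in_ASC: "(a, b) \<in> HA \<Longrightarrow> (a, b) \<in> ASC"
  by (metis used_arcE walk_step_in_ASC)

lemma vertex_visited: "v \<in> VSC \<Longrightarrow> \<exists>w\<in>W. v \<in> set w"
  using connected by blast

lemma walk_source_iff:
  assumes "w \<in> W" and "q < length w"
  shows "DSC_B (w ! q) \<noteq> 0 \<longleftrightarrow> q = 0"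
proof
  assume source: "DSC_B (w ! q) \<noteq> 0"
  show "q = 0"
  proof (rule ccontr)
    assume "q \<noteq> 0"
    then obtain q' where "q = Suc q'"
      using not0_implies_Suc by blast
    then have "(w ! q', w ! q) \<in> ASC"
      using walk_step_in_ASC[OF assms(1)] assms(2) by simp
    then show False
      using source by (simp add: arc_target_not_source)
  qed
next
  assume "q = 0"
  with assms have "w \<noteq> []" and start: "hd w = w ! q" and "hd w \<in> VSC"
    using walk_nth_in_VSC by (auto simp: hd_conv_nth)
  then have "length (filter (\<lambda>x. hd x = hd w) ws) = DSC_B (w ! q)"
    using starts by (simp add: start)
  moreover have "filter (\<lambda>x. hd x = hd w) ws \<noteq> []"
    using assms(1) by (auto simp: filter_empty_conv)
  ultimately show "DSC_B (w ! q) \<noteq> 0"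
    by (metis length_0_conv)
qed

lemma walk_predecessor:
  assumes "w \<in> W" and "q < length w" and "DSC_B (w ! q) = 0"
  shows "\<exists>q1. q = Suc q1 \<and> (w ! q1, w ! q) \<in> ASC \<and> (w ! q1, w ! q) \<in> HA"
proof -
  obtain q1 where "q = Suc q1"
    using walk_source_iff[OF assms(1,2)] assms(3) not0_implies_Suc by blast
  then show ?thesis
    using walk_step_in_ASC[OF assms(1)] walk_step_used[OF assms(1)] assms(2) by auto
qed

lemma card_walks_from_le:
  assumes "finite A" and "A \<subseteq> VSC"
  shows "card {w \<in> W. hd w \<in> A} \<le> card A"
proof (rule card_preimage_le_if_length_filter_le_1[OF assms(1)])
  fix v assume "v \<in> A"
  then show "length (filter (\<lambda>w. hd w = v) ws) \<le> 1"
    using starts assms(2) by (auto simp: DSC_B_def split: vtx.split)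
qed

lemma U'ij_position:
  assumes "w \<in> W" and "q < length w" and "w ! q = U'ij b j"
  shows "q = 2 \<and> (\<exists>j'\<in>Iset m S b. hd w = Uij b j')"
proof -
  obtain q1 where q1: "q = Suc q1" "(w ! q1, w ! q) \<in> ASC"
    using walk_predecessor[OF assms(1,2)] assms(3) by (auto simp: DSC_B_def)
  then have u: "w ! q1 = U b"
    using arc_into_U'ij assms(3) by simp
  obtain q2 where q2: "q1 = Suc q2" "(w ! q2, w ! q1) \<in> ASC"
    using walk_predecessor[OF assms(1), of q1] q1(1) assms(2) u by (auto simp: DSC_B_def)
  then obtain j' where j': "w ! q2 = Uij b j'"
    using arc_into_U u by auto
  have "q2 = 0"
    using walk_source_iff[OF assms(1), of q2] j' q1(1) q2(1) assms(2) by (simp add: DSC_B_def)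
  moreover have "j' \<in> Iset m S b"
    using walk_nth_in_VSC[OF assms(1), of q2] j' q1(1) q2(1) assms(2) by simp
  moreover have "hd w = w ! 0"
    using assms(2) by (cases w) auto
  ultimately show ?thesis
    using j' q1(1) q2(1) by auto
qed

lemma U'ij_visited_once:
  assumes "w \<in> W" and "w' \<in> W" and "U'ij b j \<in> set w" and "U'ij b j \<in> set w'"
  shows "w = w'"
proof -
  define I where "I = Iset m S b"
  define P where "P = {x \<in> W. hd x \<in> (\<lambda>j. Uij b j) ` I}"
  have visitor: "x \<in> P \<and> x ! 2 = U'ij b jj" if x: "x \<in> W" "U'ij b jj \<in> set x" for x jj
  proof -
    obtain q where "q < length x" "x ! q = U'ij b jj"
      using x(2) by (auto simp: in_set_conv_nth)
    with U'ij_position[OF x(1)] have "q = 2" "\<exists>j'\<in>I. hd x = Uij b j'"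
      by (auto simp: I_def)
    then show ?thesis
      using x(1) \<open>x ! q = U'ij b jj\<close> by (auto simp: P_def)
  qed
  have "b \<in> {1..n}"
    using walk_vertex_in_VSC[OF assms(1,3)] by simp
  have "finite I"
    by (simp add: I_def Iset_def)
  have "card P \<le> card ((\<lambda>j. Uij b j) ` I)"
    unfolding P_def using \<open>finite I\<close> \<open>b \<in> {1..n}\<close> by (intro card_walks_from_le) (auto simp: I_def)
  also have "\<dots> = card ((\<lambda>j. U'ij b j) ` I)"
    by (simp add: card_image inj_on_def)
  also have "\<dots> \<le> card ((\<lambda>x. x ! 2) ` P)"
  proof (rule card_mono)
    show "finite ((\<lambda>x. x ! 2) ` P)"
      by (simp add: P_def)
    show "(\<lambda>j. U'ij b j) ` I \<subseteq> (\<lambda>x. x ! 2) ` P"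
    proof
      fix u assume "u \<in> (\<lambda>j. U'ij b j) ` I"
      then obtain jj where "u = U'ij b jj" "jj \<in> I"
        by blast
      then have "u \<in> VSC"
        using \<open>b \<in> {1..n}\<close> by (simp add: I_def)
      then obtain x where "x \<in> W" "u \<in> set x"
        using vertex_visited by blast
      then show "u \<in> (\<lambda>x. x ! 2) ` P"
        using visitor \<open>u = U'ij b jj\<close> by force
    qed
  qed
  finally have "card P \<le> card ((\<lambda>x. x ! 2) ` P)" .
  moreover have "finite P"
    by (simp add: P_def)
  ultimately have "inj_on (\<lambda>x. x ! 2) P"
    by (intro eq_card_imp_inj_on) (auto intro: antisym card_image_le)
  then show ?thesis
    using visitor assms by (metis inj_onD)
qed

definition entered_sets :: "nat set" where
  "entered_sets = {t \<in> {1..m}. S t \<noteq> {} \<and> (Z, Vij (Min (S t)) t) \<in> HA}"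

lemma used_arc_from_Z_is_second_step:
  assumes "(Z, Vij i t) \<in> HA"
  shows "\<exists>w\<in>W. hd w \<in> Zl ` {1..k} \<and> w ! 2 = Vij i t"
proof -
  obtain w q where w: "w \<in> W" "Suc q < length w" "w ! q = Z" "w ! Suc q = Vij i t"
    using assms by (rule used_arcE)
  obtain q1 where q1: "q = Suc q1" "(w ! q1, w ! q) \<in> ASC"
    using walk_predecessor[OF w(1), of q] w(2,3) by (auto simp: DSC_B_def)
  then obtain l where l: "w ! q1 = Zl l"
    using arc_into_Z w(3) by auto
  then have "q1 = 0"
    using walk_source_iff[OF w(1), of q1] q1(1) w(2) by (simp add: DSC_B_def)
  moreover have "l \<in> {1..k}"
    using walk_nth_in_VSC[OF w(1), of q1] l q1(1) w(2) by simp
  moreover have "hd w = w ! 0"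
    using w(2) by (cases w) auto
  ultimately have "hd w \<in> Zl ` {1..k}" and "w ! 2 = Vij i t"
    using l q1(1) w(4) by (auto simp: numeral_2_eq_2)
  then show ?thesis
    using w(1) by blast
qed

lemma card_entered_sets: "card entered_sets \<le> k"
proof -
  define Q where "Q = {w \<in> W. hd w \<in> Zl ` {1..k}}"
  have "card entered_sets = card ((\<lambda>t. Vij (Min (S t)) t) ` entered_sets)"
    by (simp add: card_image inj_on_def)
  also have "\<dots> \<le> card ((\<lambda>w. w ! 2) ` Q)"
  proof (rule card_mono)
    show "finite ((\<lambda>w. w ! 2) ` Q)"
      by (simp add: Q_def)
    show "(\<lambda>t. Vij (Min (S t)) t) ` entered_sets \<subseteq> (\<lambda>w. w ! 2) ` Q"
    proof
      fix v assume "v \<in> (\<lambda>t. Vij (Min (S t)) t) ` entered_sets"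
      then obtain t where "v = Vij (Min (S t)) t" "(Z, v) \<in> HA"
        by (auto simp: entered_sets_def)
      then show "v \<in> (\<lambda>w. w ! 2) ` Q"
        using used_arc_from_Z_is_second_step unfolding Q_def by (metis (mono_tags, lifting) image_eqI mem_Collect_eq)
    qed
  qed
  also have "\<dots> \<le> card Q"
    by (rule card_image_le) (simp add: Q_def)
  also have "\<dots> \<le> card (Zl ` {1..k})"
    unfolding Q_def by (rule card_walks_from_le) auto
  also have "\<dots> \<le> k"
    using card_image_le[of "{1..k}" Zl] by simp
  finally show ?thesis .
qed

lemma horizontal_index_increases:
  assumes "w \<in> W" and "w ! q = Vij b t" and "q \<le> q'" and "q' < length w"
  shows "\<exists>a\<ge>b. w ! q' = Vij a t \<or> w ! q' = V'ij a t"
proof -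
  have "q + d < length w \<Longrightarrow> \<exists>a\<ge>b. w ! (q + d) = Vij a t \<or> w ! (q + d) = V'ij a t" for d
  proof (induction d)
    case 0
    then show ?case
      using assms(2) by auto
  next
    case (Suc d)
    then obtain a where "a \<ge> b" "w ! (q + d) = Vij a t \<or> w ! (q + d) = V'ij a t"
      by auto
    moreover have "(w ! (q + d), w ! Suc (q + d)) \<in> ASC"
      using walk_step_in_ASC[OF assms(1)] Suc.prems by simp
    ultimately show ?case
      using arc_from_Vij no_arc_from_V'ij by (metis add_Suc_right order.trans less_imp_le)
  qed
  from this[of "q' - q"] assms(3,4) show ?thesis
    by simp
qed

lemma horizontal_path_entered_via_U'ij:
  assumes "(Z, Vij (Min (S t)) t) \<notin> HA" and "w \<in> W"
  shows "q < length w \<Longrightarrow> w ! q = Vij a t \<or> w ! q = V'ij a t \<Longrightarrow> \<exists>b\<le>a. U'ij b t \<in> set w"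
proof (induction q arbitrary: a rule: less_induct)
  case (less q)
  have "DSC_B (w ! q) = 0"
    using less.prems(2) by (auto simp: DSC_B_def)
  then obtain q1 where q1: "q = Suc q1" and step: "(w ! q1, w ! q) \<in> ASC" "(w ! q1, w ! q) \<in> HA"
    using walk_predecessor[OF assms(2) less.prems(1)] by blast
  have IH: "\<exists>b\<le>a. U'ij b t \<in> set w" if "w ! q1 = Vij x t" "x \<le> a" for x
    using less.IH[of q1 x] that q1 less.prems(1) order.trans by auto
  consider "w ! q = V'ij a t" | "w ! q = Vij a t"
    using less.prems(2) by blast
  then show ?case
  proof cases
    case 1
    then have "w ! q1 = Vij a t"
      using arc_into_V'ij step(1) by simp
    then show ?thesis
      using IH by blast
  next
    case 2
    with step(1) have "(w ! q1, Vij a t) \<in> ASC"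
      by simp
    then consider "w ! q1 = U'ij a t" | "w ! q1 = Z \<and> a = Min (S t)" | x where "x < a" "w ! q1 = Vij x t"
      using arc_into_Vij by blast
    then show ?thesis
    proof cases
      case 1
      then show ?thesis
        using less.prems(1) q1 nth_mem by (metis Suc_lessD order.refl)
    next
      case 2
      then show ?thesis
        using assms(1) step(2) \<open>w ! q = Vij a t\<close> by simp
    next
      case 3
      then show ?thesis
        using IH by simp
    qed
  qed
qed

lemma V'ij_last:
  assumes "w \<in> W" and "V'ij a t \<in> set w"
  shows "last w = V'ij a t"
proof -
  obtain q where q: "q < length w" "w ! q = V'ij a t"
    using assms(2) by (auto simp: in_set_conv_nth)
  have "\<not> Suc q < length w"
    using walk_step_in_ASC[OF assms(1)] no_arc_from_V'ij q(2) by metis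
  then have "q = length w - 1" and "w \<noteq> []"
    using q(1) by auto
  then show ?thesis
    using q(2) by (simp add: last_conv_nth)
qed

lemma V'ij_reached_via_U'ij:
  assumes "(Z, Vij (Min (S t)) t) \<notin> HA" and "w \<in> W" and "V'ij a t \<in> set w"
  shows "\<exists>c\<in>S t. c \<le> a \<and> U'ij c t \<in> set w"
proof -
  obtain q where "q < length w" "w ! q = V'ij a t"
    using assms(3) by (auto simp: in_set_conv_nth)
  then obtain c where c: "c \<le> a" "U'ij c t \<in> set w"
    using horizontal_path_entered_via_U'ij[OF assms(1,2)] by blast
  moreover have "c \<in> S t"
    using walk_vertex_in_VSC[OF assms(2) c(2)] by (simp add: Iset_def)
  ultimately show ?thesis
    by blast
qed

lemma walk_through_U'ij_descends:
  assumes unentered: "(Z, Vij (Min (S t)) t) \<notin> HA"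
    and "w \<in> W" and "U'ij b t \<in> set w"
  shows "last w = V'ij b t"
proof -
  have "t \<in> {1..m}" "b \<in> S t"
    using walk_vertex_in_VSC[OF assms(2,3)] by (auto simp: Iset_def)
  have "S t \<subseteq> {1..n}"
    using sets_in_universe \<open>t \<in> {1..m}\<close> by blast
  then have "V'ij a t \<in> VSC" if "a \<in> S t" for a
    using that \<open>t \<in> {1..m}\<close> by (auto simp: Iset_def)
  then have reached: "\<forall>a\<in>S t. \<exists>x. x \<in> W \<and> V'ij a t \<in> set x"
    using vertex_visited by blast
  obtain walk_to where walk_to: "\<forall>a\<in>S t. walk_to a \<in> W \<and> V'ij a t \<in> set (walk_to a)"
    using bchoice[OF reached] by blast
  have entered: "\<forall>a\<in>S t. \<exists>c. c \<in> S t \<and> c \<le> a \<and> U'ij c t \<in> set (walk_to a)"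
    using V'ij_reached_via_U'ij[OF unentered] walk_to by blast
  obtain g where g: "\<forall>a\<in>S t. g a \<in> S t \<and> g a \<le> a \<and> U'ij (g a) t \<in> set (walk_to a)"
    using bchoice[OF entered] by blast
  have "inj_on g (S t)"
  proof (rule inj_onI)
    fix a a' assume a: "a \<in> S t" "a' \<in> S t" "g a = g a'"
    then have "walk_to a \<in> W" "walk_to a' \<in> W"
      "U'ij (g a) t \<in> set (walk_to a)" "U'ij (g a) t \<in> set (walk_to a')"
      using g walk_to by auto
    then have "walk_to a = walk_to a'"
      by (rule U'ij_visited_once)
    moreover have "last (walk_to a) = V'ij a t" "last (walk_to a') = V'ij a' t"
      using V'ij_last walk_to a(1,2) by auto
    ultimately have "V'ij a t = V'ij a' t"
      by metis
    then show "a = a'"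
      by simp
  qed
  then have "g b = b"
    using g \<open>b \<in> S t\<close> by (intro inj_on_decreasing_self_map_id) auto
  then have "walk_to b \<in> W" "U'ij b t \<in> set (walk_to b)"
    using g walk_to \<open>b \<in> S t\<close> by auto
  then have "walk_to b = w"
    using U'ij_visited_once assms(2,3) by blast
  then show ?thesis
    using V'ij_last walk_to \<open>b \<in> S t\<close> by blast
qed

lemma unentered_horizontal_path_unused:
  assumes unentered: "(Z, Vij (Min (S t)) t) \<notin> HA"
  shows "(Vij x t, Vij y t) \<notin> HA"
proof
  assume "(Vij x t, Vij y t) \<in> HA"
  then obtain w q where w: "w \<in> W" "Suc q < length w" "w ! q = Vij x t" "w ! Suc q = Vij y t"
    by (rule used_arcE)
  then have "x < y"
    using arc_from_Vij walk_step_in_ASC by fastforce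
  obtain b where "b \<le> x" "U'ij b t \<in> set w"
    using horizontal_path_entered_via_U'ij[OF unentered w(1)] w(2,3) Suc_lessD by blast
  then have "last w = V'ij b t"
    using walk_through_U'ij_descends[OF unentered w(1)] by blast
  moreover have "Suc q \<le> length w - 1" "length w - 1 < length w"
    using w(2) by auto
  then obtain a where "a \<ge> y" "w ! (length w - 1) = Vij a t \<or> w ! (length w - 1) = V'ij a t"
    using horizontal_index_increases[OF w(1,4)] by blast
  moreover have "last w = w ! (length w - 1)"
    using w(2) by (intro last_conv_nth) auto
  ultimately show False
    using \<open>b \<le> x\<close> \<open>x < y\<close> by auto
qed

lemma entered_sets_cover:
  assumes "i \<in> {1..n}"
  shows "\<exists>t\<in>entered_sets. i \<in> S t"
proof (rule ccontr)
  assume uncovered: "\<not> (\<exists>t\<in>entered_sets. i \<in> S t)"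
  have closed: "element_of a = Some i \<longleftrightarrow> element_of b = Some i" if ab: "(a, b) \<in> HA" for a b
  proof (rule ccontr)
    assume differ: "\<not> (element_of a = Some i \<longleftrightarrow> element_of b = Some i)"
    then consider t where "t \<in> {1..m}" "S t \<noteq> {}" "a = Z" "b = Vij (Min (S t)) t"
      | x y t where "t \<in> {1..m}" "x \<in> S t" "y \<in> S t" "a = Vij x t" "b = Vij y t"
      using arc_between_elements[OF used_arc_in_ASC[OF ab]] by fastforce
    then show False
    proof cases
      case (1 t)
      have "finite (S t)"
        using sets_in_universe \<open>t \<in> {1..m}\<close> finite_subset by blast
      then have "Min (S t) \<in> S t"
        using \<open>S t \<noteq> {}\<close> by (rule Min_in)
      moreover have "t \<in> entered_sets"
        using 1 ab by (simp add: entered_sets_def)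
      moreover have "Min (S t) = i"
        using 1 differ by simp
      ultimately show False
        using uncovered by blast
    next
      case (2 x y t)
      then have "(Z, Vij (Min (S t)) t) \<in> HA"
        using ab unentered_horizontal_path_unused by blast
      then have "t \<in> entered_sets"
        using 2 unfolding entered_sets_def by blast
      moreover have "x = i \<or> y = i"
        using 2 differ by auto
      ultimately show False
        using 2 uncovered by blast
    qed
  qed
  have "(U i, Z) \<in> (HA \<union> HA\<inverse>)\<^sup>*"
    using connected assms by simp
  then have "Z \<in> {v. element_of v = Some i}"
    by (rule rtrancl_symcl_preserves) (simp_all add: closed)
  then show False
    by simp
qed

end

theorem lemma8:
  fixes n m k :: nat and S :: "nat \<Rightarrow> nat set"
  assumes "\<forall>t\<in>{1..m}. S t \<subseteq> {1..n}"
    and "(\<Union>t\<in>{1..m}. S t) = {1..n}"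
    and "1 \<le> k" and "k \<le> m"
    and "ST_positive (DSC_V n m S k) (DSC_A n m S k) DSC_F DSC_B"
  shows "\<exists>J \<subseteq> {1..m}. card J = k \<and> (\<Union>t\<in>J. S t) = {1..n}"
proof -
  obtain ws where "DSC_solution n m k S ws"
    using assms(1,5) unfolding DSC_solution_def ST_positive_def DSC_F_def Let_def by auto
  then interpret DSC_solution n m k S ws .
  have "entered_sets \<subseteq> {1..m}" "card entered_sets \<le> k" "k \<le> card {1..m}"
    using card_entered_sets assms(4) by (auto simp: entered_sets_def)
  then obtain K where K: "entered_sets \<subseteq> K" "K \<subseteq> {1..m}" "card K = k"
    using exists_card_between[of entered_sets "{1..m}" k] by auto
  have "(\<Union>t\<in>K. S t) = {1..n}"
  proof
    show "(\<Union>t\<in>K. S t) \<subseteq> {1..n}"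
      using K(2) assms(1) by fastforce
    show "{1..n} \<subseteq> (\<Union>t\<in>K. S t)"
      using K(1) entered_sets_cover by blast
  qed
  then show ?thesis
    using K by blast
qed

end
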